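(* Suppose $\psi_L:(0,1]\to\mathbb R$ and $\psi_R:[-1,0)\to\mathbb R$ are bounded and Lipschitz, and the rescaled weights satisfy $\alpha_\ell\le\bar\alpha$ with $\bar\alpha$ independent of $n$. Then there is a constant $C$ independent of $n$ such that $$\mathbb E\,\|\delta b\|\le C\sqrt{n^{-3}(1+\log n)},$$ where $\|\cdot\|$ is the norm of $L^2(\sigma_T)$. (The same bound holds for the truncated velocity set $S=[-1,-\delta)\cup(\delta,1]$ with the analogous partition and ordinates.)
   Context: Let $\Omega=[x_L,x_R]$ be a bounded interval and $\sigma_T$ a continuous positive function on $\Omega$. $L^2(\sigma_T)$ is $L^2(\Omega)$ with inner product $\langle f,g\rangle=\int_{x_L}^{x_R}fg\,\sigma_T\,dx$. For $\mu\in[-1,1]\setminus\{0\}$ define $b_\mu(x)=\exp\big(-\frac1\mu\int_{x_L}^x\sigma_T(y)dy\big)\psi_L(\mu)$ if $\mu>0$ and $b_\mu(x)=\exp\big(\frac1\mu\int_x^{x_R}\sigma_T(y)dy\big)\psi_R(\mu)$ if $\mu<0$. Velocity set $S=[-1,1]$, $\fint_S=\frac12\int_{-1}^1$. Let $n=2m$; partition $[-1,0)$ into intervals $S_1,\dots,S_m$ and set $S_{n+1-\ell}=-S_\ell$. For $\ell\le m$ the $\mu_\ell$ are independent, $\mu_\ell$ uniform on $S_\ell$, and $\mu_{n+1-\ell}=-\mu_\ell$. Weights $\omega_\ell=|S_\ell|/|S|$, rescaled weights $\alpha_\ell=n\omega_\ell$. Define $\delta b(x)=\sum_{\ell=1}^n\omega_\ell\,b_{\mu_\ell}(x)-\fint_S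 b_\mu(x)\,d\mu$. $\mathbb E$ denotes expectation over the random ordinates. *)

theory Defs
  imports "HOL-Probability.Probability"
begin

text \<open>Velocity set S = [-1,-d) \<union> (d,1]; d = 0 is the untruncated set [-1,1] minus {0}
  (the point 0 is a null set and b is undefined there).\<close>
definition vel_set :: "real \<Rightarrow> real set" where
  "vel_set d = {-1..<-d} \<union> {d<..1}"

definition bfun :: "(real \<Rightarrow> real) \<Rightarrow> real \<Rightarrow> real \<Rightarrow> (real \<Rightarrow> real) \<Rightarrow> (real \<Rightarrow> real)
    \<Rightarrow> real \<Rightarrow> real \<Rightarrow> real" where
  "bfun \<sigma> xL xR \<psi>L \<psi>R \<mu> x =
     (if \<mu> > 0 then exp (- (1/\<mu>) * integral {xL..x} \<sigma>) * \<psi>L \<mu>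
      else if \<mu> < 0 then exp ((1/\<mu>) * integral {x..xR} \<sigma>) * \<psi>R \<mu>
      else 0)"

definition ordinate :: "nat \<Rightarrow> (nat \<Rightarrow> real) \<Rightarrow> nat \<Rightarrow> real" where
  "ordinate m \<mu> j = (if j \<le> m then \<mu> j else - \<mu> (2*m + 1 - j))"

text \<open>Weights omega_l = |S_l|/|S|, where S_l = [t_{l-1}, t_l) for l \<le> m,
  S_{n+1-l} = - S_l, and |S| = 2(1-d).\<close>
definition weight :: "real \<Rightarrow> nat \<Rightarrow> (nat \<Rightarrow> real) \<Rightarrow> nat \<Rightarrow> real" where
  "weight d m t j =
     (if j \<le> m then t j - t (j - 1) else t (2*m + 1 - j) - t (2*m - j)) / (2 * (1 - d))"

definition delta_b :: "real \<Rightarrow> (real \<Rightarrow> real) \<Rightarrow> real \<Rightarrow> real \<Rightarrow> (real \<Rightarrow> real) \<Rightarrow> (real \<Rightarrow> real)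
    \<Rightarrow> nat \<Rightarrow> (nat \<Rightarrow> real) \<Rightarrow> (nat \<Rightarrow> real) \<Rightarrow> real \<Rightarrow> real" where
  "delta_b d \<sigma> xL xR \<psi>L \<psi>R m t \<mu> x =
     (\<Sum>j=1..2*m. weight d m t j * bfun \<sigma> xL xR \<psi>L \<psi>R (ordinate m \<mu> j) x)
     - (1 / (2 * (1 - d))) * (LINT v : vel_set d | lborel. bfun \<sigma> xL xR \<psi>L \<psi>R v x)"

definition L2_sigma_norm :: "(real \<Rightarrow> real) \<Rightarrow> real \<Rightarrow> real \<Rightarrow> (real \<Rightarrow> real) \<Rightarrow> real" where
  "L2_sigma_norm \<sigma> xL xR f = sqrt (integral {xL..xR} (\<lambda>x. (f x)^2 * \<sigma> x))"

definition ordinate_law :: "nat \<Rightarrow> (nat \<Rightarrow> real) \<Rightarrow> (nat \<Rightarrow> real) measure" where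
  "ordinate_law m t = PiM {1..m} (\<lambda>l. uniform_measure lborel {t (l - 1)..<t l})"

end

theory Submission
  imports Defs
begin

text \<open>
  The ordinates enter \<open>\<delta>b(x)\<close> only through the \<open>m\<close> independent pairs \<open>\<plusminus>\<mu>\<^sub>\<ell>\<close>, so \<open>\<delta>b(x)\<close> is a
  sum of \<open>m\<close> independent centred terms and \<open>E \<delta>b(x)\<^sup>2\<close> is the sum of their variances. The
  variance of the \<open>\<ell>\<close>-th term is at most its mean square deviation from its value at the cell
  endpoint, which by \<open>\<omega>\<^sub>\<ell> \<le> \<alpha>bar/n\<close> is \<open>\<lesssim> (\<alpha>bar/n)\<^sup>2 (D\<^sub>\<ell>\<^sup>2 + h\<^sub>\<ell>\<^sup>2)\<close>: \<open>h\<^sub>\<ell>\<close> is the cell width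
  (Lipschitz continuity of \<open>\<psi>\<close>) and \<open>D\<^sub>\<ell>\<close> the increment of the attenuation \<open>exp(-\<tau>(x)/\<bar>\<mu>\<bar>)\<close>
  across the cell. These increments are nonnegative, telescope to at most \<open>1\<close> and are
  \<open>\<lesssim> h\<^sub>\<ell>/\<tau>(x)\<close>, so \<open>\<Sum> D\<^sub>\<ell>\<^sup>2 \<lesssim> (1 + n \<tau>(x)/\<alpha>bar)\<^sup>-\<^sup>1\<close>, and the optical depth \<open>\<tau>(x)\<close> to the
  boundary grows linearly with the distance to it. Integrating over the slab turns this into
  \<open>E \<parallel>\<delta>b\<parallel>\<^sup>2 \<lesssim> n\<^sup>-\<^sup>3 (1 + log n)\<close>, and \<open>E \<parallel>\<delta>b\<parallel> \<le> (E \<parallel>\<delta>b\<parallel>\<^sup>2)\<^sup>1\<^sup>/\<^sup>2\<close>.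
\<close>

section \<open>The attenuation kernel\<close>

text \<open>\<open>exp(-g/w)\<close> is the attenuation over optical depth \<open>g\<close> in direction cosine \<open>w\<close>; the value \<open>0\<close>
  for \<open>w \<le> 0\<close> makes it monotone in \<open>w\<close> on all of \<open>\<real>\<close>.\<close>
definition attenuation :: "real \<Rightarrow> real \<Rightarrow> real" where
  "attenuation g w = (if w \<le> 0 then 0 else exp (- g / w))"

lemma attenuation_nonneg: "0 \<le> attenuation g w"
  by (simp add: attenuation_def)

lemma attenuation_le_1: "0 \<le> g \<Longrightarrow> attenuation g w \<le> 1"
  by (auto simp: attenuation_def)

lemma attenuation_mono:
  assumes "0 \<le> g" "p \<le> q"
  shows "attenuation g p \<le> attenuation g q"
proof (cases "p \<le> 0")
  case False
  then have "g / q \<le> g / p" using assms by (intro divide_left_mono) auto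
  then show ?thesis using False assms by (auto simp: attenuation_def)
qed (simp add: attenuation_def)

lemma exp_neg_le_inverse: "0 < s \<Longrightarrow> exp (- s) \<le> 1 / s" for s :: real
proof -
  assume "0 < s"
  moreover have "s \<le> exp s" using exp_ge_add_one_self[of s] by linarith
  ultimately show ?thesis by (simp add: exp_minus field_simps)
qed

lemma power2_mult_exp_neg_le_4:
  fixes s :: real
  assumes "0 \<le> s"
  shows "s\<^sup>2 * exp (- s) \<le> 4"
proof -
  have "(1 + s/2)\<^sup>2 \<le> (exp (s/2))\<^sup>2"
    using exp_ge_add_one_self[of "s/2"] assms by (intro power_mono) auto
  also have "(exp (s/2))\<^sup>2 = exp s" by (simp flip: exp_double)
  finally have "s\<^sup>2 \<le> 4 * exp s" using assms by (simp add: power2_eq_square field_simps)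
  then show ?thesis by (simp add: exp_minus field_simps)
qed

lemma attenuation_increment_le:
  assumes g: "0 < g" and pq: "0 \<le> p" "p \<le> q"
  shows "attenuation g q - attenuation g p \<le> 8 * (q - p) / g"
proof (cases "2 * p \<le> q")
  case True
  have "attenuation g q \<le> q / g"
  proof (cases "q = 0")
    case False
    then have "0 < q" using pq by linarith
    then show ?thesis using exp_neg_le_inverse[of "g / q"] g by (simp add: attenuation_def)
  qed (simp add: attenuation_def)
  also have "\<dots> \<le> 8 * (q - p) / g" using True g pq by (intro divide_right_mono) auto
  finally show ?thesis using attenuation_nonneg[of g p] by linarith
next
  case False
  then have p: "0 < p" and q: "0 < q" using pq by auto
  define y where "y = g / p - g / q"
  \<comment> \<open>Here the difference is \<open>exp(-g/q) (1 - exp(-y)) \<le> exp(-g/q) y\<close> with \<open>y \<le> 2g(q-p)/q\<^sup>2\<close> as \<open>q < 2p\<close>,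
    and \<open>s\<^sup>2 exp(-s) \<le> 4\<close> at \<open>s = g/q\<close> removes the dependence on \<open>q\<close>.\<close>
  have y: "y \<le> 2 * g * (q - p) / q\<^sup>2"
  proof -
    have "y = g * (q - p) / q * (1 / p)" using p q by (simp add: y_def field_simps)
    also have "\<dots> \<le> g * (q - p) / q * (2 / q)"
      using False p q g pq by (intro mult_left_mono) (auto simp: field_simps)
    finally show ?thesis by (simp add: power2_eq_square ac_simps)
  qed
  have "attenuation g q - attenuation g p = exp (- g / q) * (1 - exp (- y))"
    using p q by (simp add: attenuation_def y_def algebra_simps flip: exp_add)
  also have "\<dots> \<le> exp (- g / q) * y"
    using exp_ge_add_one_self[of "- y"] by (intro mult_left_mono) auto
  also have "\<dots> \<le> exp (- g / q) * (2 * g * (q - p) / q\<^sup>2)"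
    using y by (intro mult_left_mono) auto
  also have "\<dots> = 2 * ((g / q)\<^sup>2 * exp (- (g / q))) * (q - p) / g"
    using g q by (simp add: field_simps power2_eq_square)
  also have "\<dots> \<le> 2 * 4 * (q - p) / g"
    using power2_mult_exp_neg_le_4[of "g / q"] g q pq
    by (intro divide_right_mono mult_right_mono mult_left_mono) auto
  finally show ?thesis by simp
qed

lemma abs_mult_diff_lipschitz_le:
  fixes \<psi> :: "real \<Rightarrow> real"
  assumes "L-lipschitz_on S \<psi>" "u \<in> S" "v \<in> S" "\<bar>\<psi> v\<bar> \<le> M" "\<bar>a\<bar> \<le> 1"
  shows "\<bar>b * \<psi> v - a * \<psi> u\<bar> \<le> \<bar>b - a\<bar> * M + L * \<bar>v - u\<bar>"
proof -
  have "b * \<psi> v - a * \<psi> u = (b - a) * \<psi> v + a * (\<psi> v - \<psi> u)"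
    by (simp add: algebra_simps)
  then have "\<bar>b * \<psi> v - a * \<psi> u\<bar> \<le> \<bar>b - a\<bar> * \<bar>\<psi> v\<bar> + \<bar>a\<bar> * \<bar>\<psi> v - \<psi> u\<bar>"
    by (metis abs_mult abs_triangle_ineq)
  also have "\<dots> \<le> \<bar>b - a\<bar> * M + 1 * (L * \<bar>v - u\<bar>)"
    using lipschitz_onD[OF assms(1,3,2)] assms(4,5)
    by (intro add_mono mult_mono) (auto simp: dist_real_def)
  finally show ?thesis by simp
qed

lemma power2_add_le: "(a + b)\<^sup>2 \<le> 2 * a\<^sup>2 + 2 * b\<^sup>2" for a b :: real
  using zero_le_power2[of "a - b"] by (simp add: power2_eq_square algebra_simps)

lemma has_integral_inverse_boundary_distances:
  fixes a K xL xR :: real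
  assumes a: "0 < a" and K: "0 < K" and lr: "xL \<le> xR"
  shows "((\<lambda>x. K / (a * (xR - x) + K) + K / (a * (x - xL) + K)) has_integral
     2 * K / a * (ln (a * (xR - xL) + K) - ln K)) {xL..xR}"
proof -
  define A where "A x = K / a * (ln (a * (x - xL) + K) - ln (a * (xR - x) + K))" for x
  have deriv: "(A has_vector_derivative K / (a * (xR - x) + K) + K / (a * (x - xL) + K))
      (at x within {xL..xR})" if x: "x \<in> {xL..xR}" for x
  proof -
    have p: "0 < a * (x - xL) + K" "0 < a * (xR - x) + K"
      using x a K by (auto intro: add_nonneg_pos)
    have "(A has_real_derivative K / a * (a / (a * (x - xL) + K) - (- a) / (a * (xR - x) + K))) (at x)"
      unfolding A_def using p a by (auto intro!: derivative_eq_intros)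
    moreover have "K / a * (a / (a * (x - xL) + K) - (- a) / (a * (xR - x) + K))
        = K / (a * (xR - x) + K) + K / (a * (x - xL) + K)"
      using a by (simp add: field_simps)
    ultimately show ?thesis
      by (simp add: has_real_derivative_iff_has_vector_derivative[symmetric] has_field_derivative_at_within)
  qed
  have "A xR - A xL = 2 * K / a * (ln (a * (xR - xL) + K) - ln K)"
    unfolding A_def using a by (simp add: field_simps)
  with fundamental_theorem_of_calculus[OF lr deriv] show ?thesis by simp
qed

lemma sum_atLeastAtMost_mirror:
  fixes f :: "nat \<Rightarrow> 'a::comm_monoid_add"
  shows "(\<Sum>j\<in>{1..2*m}. f j) = (\<Sum>l\<in>{1..m}. f l + f (2*m + 1 - l))"
proof -
  have "{1..2*m} = {1..m} \<union> {m+1..2*m}" by auto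
  then have "(\<Sum>j\<in>{1..2*m}. f j) = (\<Sum>l\<in>{1..m}. f l) + (\<Sum>j\<in>{m+1..2*m}. f j)"
    by (simp add: sum.union_disjoint)
  also have "(\<Sum>j\<in>{m+1..2*m}. f j) = (\<Sum>l\<in>{1..m}. f (2*m + 1 - l))"
    by (rule sum.reindex_bij_witness[of _ "\<lambda>j. 2*m + 1 - j" "\<lambda>j. 2*m + 1 - j"]) auto
  finally show ?thesis by (simp add: sum.distrib)
qed

lemma ln_1_plus_mult_le:
  fixes N c :: real
  assumes "1 \<le> N" "0 \<le> c"
  shows "ln (1 + N * c) \<le> (1 + ln N) * (1 + ln (1 + c))"
proof -
  have "ln (1 + N * c) \<le> ln (N * (1 + c))"
    using assms by (intro ln_mono) (auto simp: algebra_simps add_pos_nonneg)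
  also have "\<dots> = ln N + ln (1 + c)" using assms by (simp add: ln_mult add_pos_nonneg)
  also have "\<dots> \<le> (1 + ln N) * (1 + ln (1 + c))"
    using assms ln_ge_zero[of N] ln_ge_zero[of "1 + c"] by (simp add: algebra_simps)
  finally show ?thesis .
qed

lemma integral_uniform_measure_lborel:
  fixes f :: "real \<Rightarrow> real"
  assumes A: "A \<in> sets borel" "0 < measure lborel A" "emeasure lborel A < \<infinity>"
    and f[measurable]: "f \<in> borel_measurable borel"
  shows "integral\<^sup>L (uniform_measure lborel A) f = (LINT x:A|lborel. f x) / measure lborel A"
proof -
  have [measurable]: "A \<in> sets borel" using A by simp
  have "emeasure lborel A = ennreal (measure lborel A)"
    using A by (simp add: emeasure_eq_ennreal_measure less_top)
  then have "uniform_measure lborel A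
      = density lborel (\<lambda>x. ennreal (indicator A x / measure lborel A))"
    unfolding uniform_measure_def
    by (intro density_cong)
       (use A in \<open>auto simp: divide_ennreal divide_ennreal[of 1, simplified] split: split_indicator\<close>)
  then have "integral\<^sup>L (uniform_measure lborel A) f
      = integral\<^sup>L lborel (\<lambda>x. (indicator A x / measure lborel A) *\<^sub>R f x)"
    by (simp add: integral_density)
  also have "\<dots> = integral\<^sup>L lborel (\<lambda>x. indicator A x *\<^sub>R f x) / measure lborel A"
    by (simp add: field_simps flip: integral_divide_zero)
  finally show ?thesis unfolding set_lebesgue_integral_def .
qed

lemma (in prob_space) variance_le_mean_square_deviation:
  fixes Y :: "'a \<Rightarrow> real"
  assumes [simp]: "integrable M Y" "integrable M (\<lambda>x. (Y x)\<^sup>2)"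
  shows "variance Y \<le> expectation (\<lambda>x. (Y x - a)\<^sup>2)"
proof -
  have "expectation (\<lambda>x. (Y x - a)\<^sup>2) = expectation (\<lambda>x. (Y x)\<^sup>2) - 2 * a * expectation Y + a\<^sup>2"
    by (simp add: power2_diff prob_space)
  moreover have "0 \<le> (expectation Y)\<^sup>2 - 2 * a * expectation Y + a\<^sup>2"
    using zero_le_power2[of "expectation Y - a"] by (simp add: power2_diff algebra_simps)
  ultimately show ?thesis
    using variance_eq[OF assms] by linarith
qed

lemma (in prob_space) expectation_le_sqrt_expectation_square:
  fixes f :: "'a \<Rightarrow> real"
  assumes "integrable M f" "integrable M (\<lambda>x. (f x)\<^sup>2)"
  shows "expectation f \<le> sqrt (expectation (\<lambda>x. (f x)\<^sup>2))"
  using variance_positive[of f] variance_eq[OF assms] by (intro real_le_rsqrt) simp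

lemma (in product_prob_space) integrable_integral_PiM_prod_subset:
  fixes f :: "'i \<Rightarrow> 'a \<Rightarrow> real"
  assumes I: "finite I" and J: "J \<subseteq> I" and f: "\<And>j. j \<in> J \<Longrightarrow> integrable (M j) (f j)"
  shows "integrable (Pi\<^sub>M I M) (\<lambda>\<omega>. \<Prod>j\<in>J. f j (\<omega> j))"
    and "(\<integral>\<omega>. (\<Prod>j\<in>J. f j (\<omega> j)) \<partial>Pi\<^sub>M I M) = (\<Prod>j\<in>J. integral\<^sup>L (M j) (f j))"
proof -
  define F where "F i v = (if i \<in> J then f i v else 1)" for i v
  have F: "integrable (M i) (F i)" if "i \<in> I" for i
    using f by (cases "i \<in> J") (auto simp: F_def[abs_def])
  have restrict: "(\<Prod>i\<in>I. F i (\<omega> i)) = (\<Prod>j\<in>J. f j (\<omega> j))" for \<omega>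
    using prod.inter_restrict[OF I, of "\<lambda>j. f j (\<omega> j)" J] J by (simp add: F_def Int_absorb1)
  show "integrable (Pi\<^sub>M I M) (\<lambda>\<omega>. \<Prod>j\<in>J. f j (\<omega> j))"
    using product_integrable_prod[OF I F] by (simp add: restrict)
  have "integral\<^sup>L (M i) (F i) = (if i \<in> J then integral\<^sup>L (M i) (f i) else 1)" for i
    by (cases "i \<in> J") (simp_all add: F_def[abs_def] M.prob_space)
  then have "(\<Prod>i\<in>I. integral\<^sup>L (M i) (F i)) = (\<Prod>j\<in>J. integral\<^sup>L (M j) (f j))"
    using prod.inter_restrict[OF I, of "\<lambda>j. integral\<^sup>L (M j) (f j)" J] J
    by (simp add: Int_absorb1)
  then show "(\<integral>\<omega>. (\<Prod>j\<in>J. f j (\<omega> j)) \<partial>Pi\<^sub>M I M) = (\<Prod>j\<in>J. integral\<^sup>L (M j) (f j))"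
    using product_integral_prod[OF I F] by (simp add: restrict)
qed

lemma (in product_prob_space) integral_PiM_square_sum_centered:
  fixes f :: "'i \<Rightarrow> 'a \<Rightarrow> real"
  assumes I: "finite I"
    and f: "\<And>i. i \<in> I \<Longrightarrow> integrable (M i) (f i)"
    and f2: "\<And>i. i \<in> I \<Longrightarrow> integrable (M i) (\<lambda>v. (f i v)\<^sup>2)"
    and centered: "\<And>i. i \<in> I \<Longrightarrow> integral\<^sup>L (M i) (f i) = 0"
  shows "(\<integral>\<omega>. (\<Sum>i\<in>I. f i (\<omega> i))\<^sup>2 \<partial>Pi\<^sub>M I M) = (\<Sum>i\<in>I. \<integral>v. (f i v)\<^sup>2 \<partial>M i)"
proof -
  have cross: "integrable (Pi\<^sub>M I M) (\<lambda>\<omega>. f i (\<omega> i) * f k (\<omega> k)) \<and>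
      (\<integral>\<omega>. f i (\<omega> i) * f k (\<omega> k) \<partial>Pi\<^sub>M I M) = (if k = i then \<integral>v. (f i v)\<^sup>2 \<partial>M i else 0)"
    if "i \<in> I" "k \<in> I" for i k
  proof (cases "k = i")
    case True
    then show ?thesis
      using integrable_integral_PiM_prod_subset[of "{i}" "\<lambda>j v. (f j v)\<^sup>2"] I that f2
      by (simp add: power2_eq_square)
  next
    case False
    have "{i, k} \<subseteq> I" "\<And>j. j \<in> {i, k} \<Longrightarrow> integrable (M j) (f j)" using that f by auto
    from integrable_integral_PiM_prod_subset[OF I this] show ?thesis
      using False that centered by simp
  qed
  have "(\<integral>\<omega>. (\<Sum>i\<in>I. f i (\<omega> i))\<^sup>2 \<partial>Pi\<^sub>M I M)
      = (\<integral>\<omega>. (\<Sum>i\<in>I. \<Sum>k\<in>I. f i (\<omega> i) * f k (\<omega> k)) \<partial>Pi\<^sub>M I M)"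
    by (simp add: power2_eq_square sum_product)
  also have "\<dots> = (\<Sum>i\<in>I. \<Sum>k\<in>I. \<integral>\<omega>. f i (\<omega> i) * f k (\<omega> k) \<partial>Pi\<^sub>M I M)"
    using cross by (simp add: Bochner_Integration.integral_sum Bochner_Integration.integrable_sum)
  also have "\<dots> = (\<Sum>i\<in>I. \<integral>v. (f i v)\<^sup>2 \<partial>M i)"
    using cross I by (simp add: sum.delta)
  finally show ?thesis .
qed

section \<open>The uncollided boundary solution on a slab\<close>

locale slab =
  fixes xL xR smin smax M LL LR :: real and \<sigma> \<psi>L \<psi>R :: "real \<Rightarrow> real"
  assumes slab: "xL < xR"
    and \<sigma>_cont: "continuous_on {xL..xR} \<sigma>"
    and \<sigma>_bounds: "\<And>x. x \<in> {xL..xR} \<Longrightarrow> smin \<le> \<sigma> x \<and> \<sigma> x \<le> smax"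
    and smin_pos: "0 < smin"
    and \<psi>L_bound: "\<And>v. v \<in> {0<..1} \<Longrightarrow> \<bar>\<psi>L v\<bar> \<le> M"
    and \<psi>R_bound: "\<And>v. v \<in> {-1..<0} \<Longrightarrow> \<bar>\<psi>R v\<bar> \<le> M"
    and \<psi>L_lipschitz: "LL-lipschitz_on {0<..1} \<psi>L"
    and \<psi>R_lipschitz: "LR-lipschitz_on {-1..<0} \<psi>R"
begin

lemma M_nonneg: "0 \<le> M"
  using \<psi>L_bound[of 1] by auto

lemma smax_pos: "0 < smax"
  using \<sigma>_bounds[of xL] slab smin_pos by auto

definition depth_L :: "real \<Rightarrow> real" where
  "depth_L x = integral {xL..x} \<sigma>"

definition depth_R :: "real \<Rightarrow> real" where
  "depth_R x = integral {x..xR} \<sigma>"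

definition clamp :: "real \<Rightarrow> real" where
  "clamp x = max xL (min x xR)"

lemma clamp_in_slab: "clamp x \<in> {xL..xR}"
  using slab by (auto simp: clamp_def)

lemma clamp_id: "x \<in> {xL..xR} \<Longrightarrow> clamp x = x"
  by (auto simp: clamp_def)

lemma continuous_on_clamp: "continuous_on UNIV clamp"
  unfolding clamp_def[abs_def] by (intro continuous_intros)

lemma continuous_on_compose_clamp:
  "continuous_on {xL..xR} f \<Longrightarrow> continuous_on UNIV (\<lambda>x. f (clamp x))"
  by (rule continuous_on_compose2[OF _ continuous_on_clamp]) (use clamp_in_slab in auto)

lemma \<sigma>_integrable_on: "a \<in> {xL..xR} \<Longrightarrow> b \<in> {xL..xR} \<Longrightarrow> \<sigma> integrable_on {a..b}"
  by (rule integrable_continuous_interval, rule continuous_on_subset[OF \<sigma>_cont]) auto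

lemma continuous_on_depth_L: "continuous_on {xL..xR} depth_L"
  unfolding depth_L_def[abs_def]
  by (rule indefinite_integral_continuous_1[OF integrable_continuous_interval[OF \<sigma>_cont]])

lemma continuous_on_depth_R: "continuous_on {xL..xR} depth_R"
  unfolding depth_R_def[abs_def]
  by (rule indefinite_integral_continuous_1'[OF integrable_continuous_interval[OF \<sigma>_cont]])

lemma depth_L_lower: "x \<in> {xL..xR} \<Longrightarrow> smin * (x - xL) \<le> depth_L x"
  using integral_le[of "\<lambda>_. smin" "{xL..x}" \<sigma>] \<sigma>_integrable_on[of xL x] \<sigma>_bounds
  by (auto simp: depth_L_def mult.commute)

lemma depth_R_lower: "x \<in> {xL..xR} \<Longrightarrow> smin * (xR - x) \<le> depth_R x"
  using integral_le[of "\<lambda>_. smin" "{x..xR}" \<sigma>] \<sigma>_integrable_on[of x xR] \<sigma>_bounds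
  by (auto simp: depth_R_def mult.commute)

lemma depth_L_nonneg: "x \<in> {xL..xR} \<Longrightarrow> 0 \<le> depth_L x"
  using depth_L_lower[of x] smin_pos by (force intro: order_trans[rotated] mult_nonneg_nonneg)

lemma depth_R_nonneg: "x \<in> {xL..xR} \<Longrightarrow> 0 \<le> depth_R x"
  using depth_R_lower[of x] smin_pos by (force intro: order_trans[rotated] mult_nonneg_nonneg)

text \<open>\<open>bfun\<close> written with the attenuation kernel and made Borel measurable in both variables:
  \<open>x\<close> is clamped to the slab and \<open>\<psi>L, \<psi>R\<close> are cut off outside their domains.\<close>
definition bext :: "real \<Rightarrow> real \<Rightarrow> real" where
  "bext v x =
     (if v > 0 then attenuation (depth_L (clamp x)) v * (indicator {0<..1} v * \<psi>L v)
      else if v < 0 then attenuation (depth_R (clamp x)) (- v) * (indicator {-1..<0} v * \<psi>R v)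
      else 0)"

lemma measurable_bext[measurable]:
  assumes [measurable]: "f \<in> borel_measurable N" "g \<in> borel_measurable N"
  shows "(\<lambda>z. bext (f z) (g z)) \<in> borel_measurable N"
proof -
  have [measurable]: "(\<lambda>x. depth_L (clamp x)) \<in> borel_measurable borel"
    "(\<lambda>x. depth_R (clamp x)) \<in> borel_measurable borel"
    using continuous_on_compose_clamp[OF continuous_on_depth_L]
      continuous_on_compose_clamp[OF continuous_on_depth_R]
    by (auto intro: borel_measurable_continuous_onI)
  have [measurable]: "(\<lambda>v. indicator {0<..1} v * \<psi>L v) \<in> borel_measurable borel"
    "(\<lambda>v. indicator {-1..<0} v * \<psi>R v) \<in> borel_measurable borel"
    using borel_measurable_continuous_on_indicator[of "{0<..1}" \<psi>L]
      borel_measurable_continuous_on_indicator[of "{-1..<0}" \<psi>R]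
      lipschitz_on_continuous_on[OF \<psi>L_lipschitz] lipschitz_on_continuous_on[OF \<psi>R_lipschitz]
    by simp_all
  show ?thesis unfolding bext_def attenuation_def by measurable
qed

lemma bext_pos: "x \<in> {xL..xR} \<Longrightarrow> v \<in> {0<..1} \<Longrightarrow> bext v x = attenuation (depth_L x) v * \<psi>L v"
  by (simp add: bext_def clamp_id)

lemma bext_neg: "x \<in> {xL..xR} \<Longrightarrow> v \<in> {-1..<0} \<Longrightarrow> bext v x = attenuation (depth_R x) (- v) * \<psi>R v"
  by (simp add: bext_def clamp_id)

lemma bfun_eq_bext:
  assumes "x \<in> {xL..xR}" "v \<in> {-1..<0} \<union> {0<..1}"
  shows "bfun \<sigma> xL xR \<psi>L \<psi>R v x = bext v x"
  using assms by (auto simp: bfun_def bext_pos bext_neg attenuation_def depth_L_def depth_R_def)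

lemma abs_bext_le: "\<bar>bext v x\<bar> \<le> M"
proof -
  have factor_bound: "\<bar>attenuation g u * (indicator A w * \<psi> w)\<bar> \<le> M"
    if "0 \<le> g" "\<And>w. w \<in> A \<Longrightarrow> \<bar>\<psi> w\<bar> \<le> M" for g u w A \<psi>
  proof -
    have "\<bar>attenuation g u\<bar> * \<bar>indicator A w * \<psi> w\<bar> \<le> 1 * M"
      using that attenuation_le_1[of g u] attenuation_nonneg[of g u] M_nonneg
      by (intro mult_mono) (auto simp: indicator_def)
    then show ?thesis by (simp add: abs_mult)
  qed
  show ?thesis
    using factor_bound[of "depth_L (clamp x)" "{0<..1}" \<psi>L v v]
      factor_bound[of "depth_R (clamp x)" "{-1..<0}" \<psi>R "- v" v]
      depth_L_nonneg depth_R_nonneg clamp_in_slab \<psi>L_bound \<psi>R_bound M_nonneg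
    by (auto simp: bext_def)
qed

lemma abs_bext_diff_neg:
  assumes "x \<in> {xL..xR}" "u \<in> {-1..<0}" "v \<in> {-1..<0}"
  shows "\<bar>bext v x - bext u x\<bar>
    \<le> \<bar>attenuation (depth_R x) (- v) - attenuation (depth_R x) (- u)\<bar> * M + LR * \<bar>v - u\<bar>"
  unfolding bext_neg[OF assms(1,2)] bext_neg[OF assms(1,3)]
  using attenuation_le_1[OF depth_R_nonneg[OF assms(1)]] attenuation_nonneg
  by (intro abs_mult_diff_lipschitz_le[OF \<psi>R_lipschitz assms(2,3) \<psi>R_bound[OF assms(3)]]) auto

lemma abs_bext_diff_pos:
  assumes "x \<in> {xL..xR}" "u \<in> {0<..1}" "v \<in> {0<..1}"
  shows "\<bar>bext v x - bext u x\<bar>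
    \<le> \<bar>attenuation (depth_L x) v - attenuation (depth_L x) u\<bar> * M + LL * \<bar>v - u\<bar>"
  unfolding bext_pos[OF assms(1,2)] bext_pos[OF assms(1,3)]
  using attenuation_le_1[OF depth_L_nonneg[OF assms(1)]] attenuation_nonneg
  by (intro abs_mult_diff_lipschitz_le[OF \<psi>L_lipschitz assms(2,3) \<psi>L_bound[OF assms(3)]]) auto

lemma set_integrable_bext:
  assumes "A \<in> sets borel" "bounded A" "f \<in> borel_measurable borel"
  shows "set_integrable lborel A (\<lambda>v. bext (f v) x)"
  unfolding set_integrable_def
  by (rule integrableI_bounded_set_indicator[where B=M])
     (use assms abs_bext_le emeasure_bounded_finite in auto)

lemma set_integral_vel_set_bfun:
  assumes d: "0 \<le> d" and x: "x \<in> {xL..xR}"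
  shows "(LINT v:vel_set d|lborel. bfun \<sigma> xL xR \<psi>L \<psi>R v x)
    = (LINT v:{-1..<-d}|lborel. bext v x + bext (- v) x)"
proof -
  have "(LINT v:vel_set d|lborel. bfun \<sigma> xL xR \<psi>L \<psi>R v x) = (LINT v:vel_set d|lborel. bext v x)"
    using d x by (intro set_lebesgue_integral_cong) (auto simp: vel_set_def bfun_eq_bext)
  also have "\<dots> = (LINT v:{-1..<-d}|lborel. bext v x) + (LINT v:{d<..1}|lborel. bext v x)"
    unfolding vel_set_def using d by (intro set_integral_Un set_integrable_bext) auto
  also have "(LINT v:{d<..1}|lborel. bext v x) = (LINT v:{-1..<-d}|lborel. bext (- v) x)"
  proof -
    have "indicator {d<..1} (- v) = (indicator {-1..<-d} v :: real)" for v
      by (auto simp: indicator_def)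
    then show ?thesis
      using lborel_integral_real_affine[where f="\<lambda>v. indicator {d<..1} v * bext v x" and c="-1" and t=0]
      by (simp add: set_lebesgue_integral_def)
  qed
  also have "(LINT v:{-1..<-d}|lborel. bext v x) + \<dots> = (LINT v:{-1..<-d}|lborel. bext v x + bext (- v) x)"
    by (intro set_integral_add(2)[symmetric] set_integrable_bext) auto
  finally show ?thesis .
qed

end

section \<open>Stratified random ordinates\<close>

locale quadrature = slab +
  fixes d \<alpha>bar :: real and m :: nat and t :: "nat \<Rightarrow> real"
  assumes d: "0 \<le> d" "d < 1"
    and m_pos: "1 \<le> m"
    and t_first: "t 0 = -1" and t_last: "t m = -d"
    and t_strict: "\<And>l. l \<in> {1..m} \<Longrightarrow> t (l - 1) < t l"
    and weight_le: "\<And>j. j \<in> {1..2*m} \<Longrightarrow> real (2*m) * weight d m t j \<le> \<alpha>bar"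
begin

definition N :: real where
  "N = real (2 * m)"

definition cell :: "nat \<Rightarrow> real set" where
  "cell l = {t (l - 1)..<t l}"

definition cell_width :: "nat \<Rightarrow> real" where
  "cell_width l = t l - t (l - 1)"

definition cell_weight :: "nat \<Rightarrow> real" where
  "cell_weight l = cell_width l / (2 * (1 - d))"

lemma N_ge_1: "1 \<le> N"
  using m_pos by (simp add: N_def)

lemma t_mono: "a \<le> b \<Longrightarrow> b \<le> m \<Longrightarrow> t a \<le> t b"
proof (induction b)
  case (Suc b)
  show ?case
  proof (cases "a = Suc b")
    case False
    then have "t a \<le> t b" using Suc by auto
    also have "t b < t (Suc b)" using t_strict[of "Suc b"] Suc by auto
    finally show ?thesis by simp
  qed simp
qed simp

lemma t_range: "l \<le> m \<Longrightarrow> -1 \<le> t l \<and> t l \<le> -d"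
  using t_mono[of 0 l] t_mono[of l m] t_first t_last by auto

lemma cell_width_pos: "l \<in> {1..m} \<Longrightarrow> 0 < cell_width l"
  using t_strict by (simp add: cell_width_def)

lemma cell_weight_pos: "l \<in> {1..m} \<Longrightarrow> 0 < cell_weight l"
  using cell_width_pos d by (simp add: cell_weight_def)

lemma cell_subset: "l \<in> {1..m} \<Longrightarrow> cell l \<subseteq> {-1..<-d}"
  using t_range[of l] t_range[of "l - 1"] by (force simp: cell_def)

lemma left_end_in_cell: "l \<in> {1..m} \<Longrightarrow> t (l - 1) \<in> cell l"
  using t_strict by (simp add: cell_def)

lemma weight_eq:
  assumes "l \<in> {1..m}"
  shows "weight d m t l = cell_weight l" "weight d m t (2*m + 1 - l) = cell_weight l"
proof -
  have "2*m - (2*m + 1 - l) = l - 1" "2*m + 1 - (2*m + 1 - l) = l" "\<not> 2*m + 1 - l \<le> m"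
    using assms by auto
  then show "weight d m t l = cell_weight l" "weight d m t (2*m + 1 - l) = cell_weight l"
    using assms by (simp_all add: weight_def cell_weight_def cell_width_def)
qed

lemma cell_weight_le: "l \<in> {1..m} \<Longrightarrow> cell_weight l \<le> \<alpha>bar / N"
  using weight_le[of l] weight_eq[of l] N_ge_1 by (simp add: N_def field_simps)

lemma \<alpha>bar_pos: "0 < \<alpha>bar"
proof -
  have "0 < \<alpha>bar / N" using cell_weight_pos[of 1] cell_weight_le[of 1] m_pos by auto
  then show ?thesis using N_ge_1 by (simp add: zero_less_divide_iff)
qed

lemma cell_width_le_weight: "l \<in> {1..m} \<Longrightarrow> cell_width l \<le> 2 * cell_weight l"
  using cell_width_pos[of l] d by (simp add: cell_weight_def field_simps)

lemma sum_cell_width: "(\<Sum>l\<in>{1..m}. cell_width l) = 1 - d"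
  using sum_telescope''[of 0 m t] t_first t_last by (simp add: cell_width_def)

lemma sum_cell_weight: "(\<Sum>l\<in>{1..m}. cell_weight l) = 1 / 2"
  using sum_cell_width d by (simp add: cell_weight_def flip: sum_divide_distrib)

text \<open>Outside \<open>{1..m}\<close> the law is arbitrary; it only has to be a probability measure so that
  \<open>cell_law\<close> is a family of probability spaces indexed by all of \<open>nat\<close>.\<close>
definition cell_law :: "nat \<Rightarrow> real measure" where
  "cell_law l = uniform_measure lborel (if l \<in> {1..m} then cell l else {0..<1})"

lemma cell_measure:
  assumes "l \<in> {1..m}"
  shows "cell l \<in> sets borel" "emeasure lborel (cell l) = ennreal (cell_width l)"
    "measure lborel (cell l) = cell_width l" "emeasure lborel (cell l) < \<infinity>"
  using t_strict[OF assms] by (auto simp: cell_def cell_width_def)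

lemma prob_space_cell_law: "prob_space (cell_law l)"
proof (cases "l \<in> {1..m}")
  case True
  then show ?thesis
    unfolding cell_law_def using cell_measure(2)[OF True] cell_width_pos[OF True]
    by (intro prob_space_uniform_measure) auto
qed (auto simp: cell_law_def intro!: prob_space_uniform_measure)

lemma sets_cell_law[measurable_cong]: "sets (cell_law l) = sets borel"
  by (simp add: cell_law_def)

sublocale cells: product_prob_space cell_law "{1..m}"
  by (simp add: product_prob_space_def product_prob_space_axioms_def product_sigma_finite_def
      prob_space_cell_law prob_space_imp_sigma_finite)

lemma ordinate_law_eq: "ordinate_law m t = Pi\<^sub>M {1..m} cell_law"
  unfolding ordinate_law_def by (rule PiM_cong) (auto simp: cell_law_def cell_def)

lemma AE_cell_law: "l \<in> {1..m} \<Longrightarrow> AE v in cell_law l. v \<in> cell l"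
  unfolding cell_law_def using cell_measure cell_width_pos by (auto intro!: AE_uniform_measureI)

lemma AE_ordinates_in_cells: "AE \<mu> in Pi\<^sub>M {1..m} cell_law. \<forall>l\<in>{1..m}. \<mu> l \<in> cell l"
  by (rule eventually_ball_finite) (auto intro!: cells.AE_component AE_cell_law)

lemma integral_cell_law:
  "l \<in> {1..m} \<Longrightarrow> f \<in> borel_measurable borel
    \<Longrightarrow> integral\<^sup>L (cell_law l) f = (LINT v:cell l|lborel. f v) / cell_width l"
  using integral_uniform_measure_lborel[of "cell l" f] cell_measure[of l] cell_width_pos[of l]
  by (simp add: cell_law_def)

lemma sum_indicator_cells: "(\<Sum>l\<in>{1..m}. indicator (cell l) v) = (indicator {-1..<-d} v :: real)"
proof -
  have "(\<Sum>l\<in>{1..k}. indicator (cell l) v) = (indicator {t 0..<t k} v :: real)" if "k \<le> m" for k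
    using that
  proof (induction k)
    case (Suc k)
    have "t 0 \<le> t k" "t k \<le> t (Suc k)" using t_mono Suc by auto
    then show ?case using Suc by (auto simp: atLeastAtMostSuc_conv cell_def split: split_indicator)
  qed simp
  then show ?thesis using t_first t_last by simp
qed

definition pair_term :: "nat \<Rightarrow> real \<Rightarrow> real \<Rightarrow> real" where
  "pair_term l v x = cell_weight l * (bext v x + bext (- v) x)"

definition fluctuation :: "(nat \<Rightarrow> real) \<Rightarrow> real \<Rightarrow> real" where
  "fluctuation \<mu> x = (\<Sum>l\<in>{1..m}. pair_term l (\<mu> l) x - (\<integral>v. pair_term l v x \<partial>cell_law l))"

lemma measurable_pair_term[measurable]:
  assumes [measurable]: "f \<in> borel_measurable N'" "g \<in> borel_measurable N'"
  shows "(\<lambda>z. pair_term l (f z) (g z)) \<in> borel_measurable N'"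
  unfolding pair_term_def by measurable

lemma measurable_expectation_pair_term[measurable]:
  "(\<lambda>x. \<integral>v. pair_term l v x \<partial>cell_law l) \<in> borel_measurable borel"
proof -
  have "(\<lambda>(x, v). pair_term l v x) \<in> borel_measurable (borel \<Otimes>\<^sub>M cell_law l)"
    by measurable
  then show ?thesis by (rule cells.M.borel_measurable_lebesgue_integral)
qed

lemma measurable_fluctuation[measurable]:
  assumes [measurable]: "\<And>l. l \<in> {1..m} \<Longrightarrow> (\<lambda>z. f z l) \<in> borel_measurable N'"
    "g \<in> borel_measurable N'"
  shows "(\<lambda>z. fluctuation (f z) (g z)) \<in> borel_measurable N'"
  unfolding fluctuation_def by measurable

lemma abs_pair_term_le: "\<bar>pair_term l v x\<bar> \<le> 2 * \<bar>cell_weight l\<bar> * M"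
proof -
  have "\<bar>bext v x + bext (- v) x\<bar> \<le> 2 * M"
    using abs_bext_le[of v x] abs_bext_le[of "- v" x] by linarith
  then have "\<bar>cell_weight l\<bar> * \<bar>bext v x + bext (- v) x\<bar> \<le> \<bar>cell_weight l\<bar> * (2 * M)"
    by (rule mult_left_mono) simp
  then show ?thesis
    unfolding pair_term_def abs_mult by simp
qed

lemma integrable_pair_term:
  "integrable (cell_law l) (\<lambda>v. pair_term l v x)"
  "integrable (cell_law l) (\<lambda>v. (pair_term l v x)\<^sup>2)"
proof -
  have "\<bar>(pair_term l v x)\<^sup>2\<bar> \<le> (2 * \<bar>cell_weight l\<bar> * M)\<^sup>2" for v
    using power_mono[OF abs_pair_term_le[of l v x] abs_ge_zero, of 2] by simp
  then show "integrable (cell_law l) (\<lambda>v. (pair_term l v x)\<^sup>2)"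
    by (intro cells.M.integrable_const_bound[where B="(2 * \<bar>cell_weight l\<bar> * M)\<^sup>2"]) auto
  show "integrable (cell_law l) (\<lambda>v. pair_term l v x)"
    by (intro cells.M.integrable_const_bound[where B="2 * \<bar>cell_weight l\<bar> * M"])
       (auto simp: abs_pair_term_le)
qed

lemma sum_expectation_pair_term:
  "(\<Sum>l\<in>{1..m}. \<integral>v. pair_term l v x \<partial>cell_law l)
    = 1 / (2 * (1 - d)) * (LINT v:{-1..<-d}|lborel. bext v x + bext (- v) x)"
proof -
  define G where "G v = bext v x + bext (- v) x" for v
  have G_int: "integrable lborel (\<lambda>v. indicator A v * G v)" if "A \<in> sets borel" "bounded A" for A
    using set_integral_add(1)[OF set_integrable_bext[OF that, of "\<lambda>v. v"]
        set_integrable_bext[OF that, of uminus]]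
    by (simp add: G_def set_integrable_def distrib_left)
  have cell_bounded: "bounded (cell l)" for l by (simp add: cell_def)
  have "(\<integral>v. pair_term l v x \<partial>cell_law l)
      = 1 / (2 * (1 - d)) * integral\<^sup>L lborel (\<lambda>v. indicator (cell l) v * G v)"
    if l: "l \<in> {1..m}" for l
    using integral_cell_law[OF l, of "\<lambda>v. pair_term l v x"] cell_width_pos[OF l] d
    by (simp add: pair_term_def G_def cell_weight_def set_lebesgue_integral_def)
  then have "(\<Sum>l\<in>{1..m}. \<integral>v. pair_term l v x \<partial>cell_law l)
      = 1 / (2 * (1 - d)) * (\<Sum>l\<in>{1..m}. integral\<^sup>L lborel (\<lambda>v. indicator (cell l) v * G v))"
    by (simp add: sum_distrib_left)
  also have "(\<Sum>l\<in>{1..m}. integral\<^sup>L lborel (\<lambda>v. indicator (cell l) v * G v))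
      = integral\<^sup>L lborel (\<lambda>v. \<Sum>l\<in>{1..m}. indicator (cell l) v * G v)"
    using G_int[OF _ cell_bounded] cell_measure(1)
    by (intro Bochner_Integration.integral_sum[symmetric]) auto
  also have "\<dots> = integral\<^sup>L lborel (\<lambda>v. indicator {-1..<-d} v * G v)"
    by (simp only: sum_indicator_cells flip: sum_distrib_right)
  finally show ?thesis by (simp add: G_def set_lebesgue_integral_def)
qed

lemma delta_b_eq_fluctuation:
  assumes cells: "\<forall>l\<in>{1..m}. \<mu> l \<in> cell l" and x: "x \<in> {xL..xR}"
  shows "delta_b d \<sigma> xL xR \<psi>L \<psi>R m t \<mu> x = fluctuation \<mu> x"
proof -
  have neg: "\<mu> l \<in> {-1..<0}" and pos: "- \<mu> l \<in> {0<..1}" if "l \<in> {1..m}" for l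
    using cells cell_subset[OF that] d that by force+
  have "weight d m t l * bfun \<sigma> xL xR \<psi>L \<psi>R (ordinate m \<mu> l) x
      + weight d m t (2*m + 1 - l) * bfun \<sigma> xL xR \<psi>L \<psi>R (ordinate m \<mu> (2*m + 1 - l)) x
      = pair_term l (\<mu> l) x" if l: "l \<in> {1..m}" for l
  proof -
    have "\<not> 2*m + 1 - l \<le> m" "2*m + 1 - (2*m + 1 - l) = l" using l by auto
    then show ?thesis
      using l neg[OF l] pos[OF l] x weight_eq[OF l]
      by (simp add: ordinate_def pair_term_def bfun_eq_bext distrib_left)
  qed
  then show ?thesis
    unfolding delta_b_def fluctuation_def sum_atLeastAtMost_mirror sum_subtractf
      set_integral_vel_set_bfun[OF d(1) x] sum_expectation_pair_term
    by simp
qed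

lemma expectation_fluctuation_square:
  "(\<integral>\<mu>. (fluctuation \<mu> x)\<^sup>2 \<partial>Pi\<^sub>M {1..m} cell_law)
    = (\<Sum>l\<in>{1..m}. \<integral>v. (pair_term l v x - (\<integral>w. pair_term l w x \<partial>cell_law l))\<^sup>2 \<partial>cell_law l)"
  unfolding fluctuation_def
  by (rule cells.integral_PiM_square_sum_centered)
     (simp_all add: integrable_pair_term cells.M.prob_space power2_diff)

subsection \<open>Variance of a cell and the attenuation increments\<close>

definition attenuation_drop :: "real \<Rightarrow> nat \<Rightarrow> real" where
  "attenuation_drop g l = attenuation g (- t (l - 1)) - attenuation g (- t l)"

lemma attenuation_drop_nonneg: "0 \<le> g \<Longrightarrow> l \<in> {1..m} \<Longrightarrow> 0 \<le> attenuation_drop g l"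
  using attenuation_mono[of g "- t l" "- t (l - 1)"] t_strict[of l]
  by (simp add: attenuation_drop_def)

lemma abs_attenuation_diff_le_drop:
  assumes "0 \<le> g" "v \<in> cell l"
  shows "\<bar>attenuation g (- v) - attenuation g (- t (l - 1))\<bar> \<le> attenuation_drop g l"
  using attenuation_mono[OF assms(1), of "- t l" "- v"]
    attenuation_mono[OF assms(1), of "- v" "- t (l - 1)"] assms(2)
  by (auto simp: cell_def attenuation_drop_def)

lemma pair_term_deviation:
  assumes l: "l \<in> {1..m}" and v: "v \<in> cell l" and x: "x \<in> {xL..xR}"
  shows "\<bar>pair_term l v x - pair_term l (t (l - 1)) x\<bar>
    \<le> cell_weight l * (M * (attenuation_drop (depth_R x) l + attenuation_drop (depth_L x) l)
      + (LL + LR) * cell_width l)"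
proof -
  let ?u = "t (l - 1)"
  have u: "?u \<in> {-1..<0}" "- ?u \<in> {0<..1}" and v': "v \<in> {-1..<0}" "- v \<in> {0<..1}"
    using cell_subset[OF l] left_end_in_cell[OF l] v d by force+
  have vu: "\<bar>v - ?u\<bar> \<le> cell_width l" using v by (auto simp: cell_def cell_width_def)
  have "\<bar>bext v x - bext ?u x\<bar>
      \<le> \<bar>attenuation (depth_R x) (- v) - attenuation (depth_R x) (- ?u)\<bar> * M + LR * \<bar>v - ?u\<bar>"
    by (rule abs_bext_diff_neg[OF x u(1) v'(1)])
  also have "\<dots> \<le> attenuation_drop (depth_R x) l * M + LR * cell_width l"
    using abs_attenuation_diff_le_drop[OF depth_R_nonneg[OF x] v] vu M_nonneg
      lipschitz_on_nonneg[OF \<psi>R_lipschitz]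
    by (intro add_mono mult_right_mono mult_left_mono) auto
  finally have R: "\<bar>bext v x - bext ?u x\<bar> \<le> \<dots>" .
  have "\<bar>bext (- v) x - bext (- ?u) x\<bar>
      \<le> \<bar>attenuation (depth_L x) (- v) - attenuation (depth_L x) (- ?u)\<bar> * M + LL * \<bar>- v - - ?u\<bar>"
    by (rule abs_bext_diff_pos[OF x u(2) v'(2)])
  also have "\<dots> \<le> attenuation_drop (depth_L x) l * M + LL * cell_width l"
    using abs_attenuation_diff_le_drop[OF depth_L_nonneg[OF x] v] vu M_nonneg
      lipschitz_on_nonneg[OF \<psi>L_lipschitz]
    by (intro add_mono mult_right_mono mult_left_mono) auto
  finally have L: "\<bar>bext (- v) x - bext (- ?u) x\<bar> \<le> \<dots>" .
  have "pair_term l v x - pair_term l ?u x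
      = cell_weight l * ((bext v x - bext ?u x) + (bext (- v) x - bext (- ?u) x))"
    by (simp add: pair_term_def algebra_simps)
  then have "\<bar>pair_term l v x - pair_term l ?u x\<bar>
      = cell_weight l * \<bar>(bext v x - bext ?u x) + (bext (- v) x - bext (- ?u) x)\<bar>"
    using cell_weight_pos[OF l] by (simp add: abs_mult)
  also have "\<dots> \<le> cell_weight l * (\<bar>bext v x - bext ?u x\<bar> + \<bar>bext (- v) x - bext (- ?u) x\<bar>)"
    using cell_weight_pos[OF l] by (intro mult_left_mono abs_triangle_ineq) auto
  also have "\<dots> \<le> cell_weight l * (M * (attenuation_drop (depth_R x) l + attenuation_drop (depth_L x) l)
      + (LL + LR) * cell_width l)"
    using R L cell_weight_pos[OF l] by (intro mult_left_mono) (auto simp: algebra_simps)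
  finally show ?thesis .
qed

lemma variance_pair_term_le:
  assumes l: "l \<in> {1..m}" and x: "x \<in> {xL..xR}"
  shows "(\<integral>v. (pair_term l v x - (\<integral>w. pair_term l w x \<partial>cell_law l))\<^sup>2 \<partial>cell_law l)
    \<le> (cell_weight l)\<^sup>2 * (4 * M\<^sup>2 * ((attenuation_drop (depth_R x) l)\<^sup>2 + (attenuation_drop (depth_L x) l)\<^sup>2)
      + 2 * (LL + LR)\<^sup>2 * (cell_width l)\<^sup>2)"
proof -
  define a b where "a = attenuation_drop (depth_R x) l" and "b = attenuation_drop (depth_L x) l"
  define B where "B = cell_weight l * (M * (a + b) + (LL + LR) * cell_width l)"
  have B: "0 \<le> B"
    using cell_weight_pos[OF l] M_nonneg cell_width_pos[OF l] lipschitz_on_nonneg[OF \<psi>L_lipschitz]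
      lipschitz_on_nonneg[OF \<psi>R_lipschitz] attenuation_drop_nonneg[OF depth_R_nonneg[OF x] l]
      attenuation_drop_nonneg[OF depth_L_nonneg[OF x] l]
    by (simp add: B_def a_def b_def)
  have "(\<integral>v. (pair_term l v x - (\<integral>w. pair_term l w x \<partial>cell_law l))\<^sup>2 \<partial>cell_law l)
      \<le> (\<integral>v. (pair_term l v x - pair_term l (t (l - 1)) x)\<^sup>2 \<partial>cell_law l)"
    by (rule cells.M.variance_le_mean_square_deviation[OF integrable_pair_term])
  also have "\<dots> \<le> (\<integral>v. B\<^sup>2 \<partial>cell_law l)"
  proof (rule integral_mono_AE')
    show "AE v in cell_law l. (pair_term l v x - pair_term l (t (l - 1)) x)\<^sup>2 \<le> B\<^sup>2"
      using AE_cell_law[OF l]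
      by eventually_elim
         (use B pair_term_deviation[OF l _ x] in \<open>simp add: B_def a_def b_def power2_le_iff_abs_le\<close>)
  qed simp_all
  also have "\<dots> = B\<^sup>2" by (simp add: cells.M.prob_space)
  also have "\<dots> \<le> (cell_weight l)\<^sup>2 * (2 * (M * (a + b))\<^sup>2 + 2 * ((LL + LR) * cell_width l)\<^sup>2)"
    unfolding B_def power_mult_distrib[of "cell_weight l"] by (intro mult_left_mono power2_add_le) simp
  also have "\<dots> \<le> (cell_weight l)\<^sup>2 * (4 * M\<^sup>2 * (a\<^sup>2 + b\<^sup>2) + 2 * (LL + LR)\<^sup>2 * (cell_width l)\<^sup>2)"
  proof (intro mult_left_mono)
    have "2 * (M * (a + b))\<^sup>2 = M\<^sup>2 * (2 * (a + b)\<^sup>2)" by (simp add: power_mult_distrib)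
    also have "\<dots> \<le> M\<^sup>2 * (2 * (2 * a\<^sup>2 + 2 * b\<^sup>2))"
      using power2_add_le[of a b] by (intro mult_left_mono) auto
    also have "\<dots> = 4 * M\<^sup>2 * (a\<^sup>2 + b\<^sup>2)" by (simp add: algebra_simps)
    finally show "2 * (M * (a + b))\<^sup>2 + 2 * ((LL + LR) * cell_width l)\<^sup>2
        \<le> 4 * M\<^sup>2 * (a\<^sup>2 + b\<^sup>2) + 2 * (LL + LR)\<^sup>2 * (cell_width l)\<^sup>2"
      by (simp add: power_mult_distrib)
  qed simp
  finally show ?thesis by (simp add: a_def b_def)
qed

definition K :: real where
  "K = 16 * \<alpha>bar"

definition phi :: "real \<Rightarrow> real" where
  "phi g = 2 * K / (N * g + K)"

lemma K_pos: "0 < K"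
  using \<alpha>bar_pos by (simp add: K_def)

lemma phi_nonneg: "0 \<le> g \<Longrightarrow> 0 \<le> phi g"
  unfolding phi_def using K_pos N_ge_1 by (auto intro!: divide_nonneg_pos add_nonneg_pos)

lemma phi_antimono: "0 \<le> g \<Longrightarrow> g \<le> g' \<Longrightarrow> phi g' \<le> phi g"
  unfolding phi_def using K_pos N_ge_1
  by (intro divide_left_mono add_right_mono mult_left_mono mult_pos_pos add_nonneg_pos) auto

lemma phi_le_2: "0 \<le> g \<Longrightarrow> phi g \<le> 2"
  unfolding phi_def using K_pos N_ge_1 by (simp add: divide_le_eq add_nonneg_pos)

lemma continuous_on_phi: "continuous_on {0..} phi"
proof -
  have "0 < N * g + K" if "0 \<le> g" for g
    using that K_pos N_ge_1 by (intro add_nonneg_pos mult_nonneg_nonneg) auto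
  then show ?thesis
    unfolding phi_def by (intro continuous_intros) (metis atLeast_iff less_irrefl)
qed

text \<open>A drop is at most \<open>1\<close>, and by \<open>attenuation_increment_le\<close> at most \<open>8 cell_width / g \<le> K / (N g)\<close>;
  \<open>phi g\<close> dominates the smaller of the two.\<close>
lemma attenuation_drop_le_phi:
  assumes g: "0 \<le> g" and l: "l \<in> {1..m}"
  shows "attenuation_drop g l \<le> phi g"
proof (cases "K \<le> N * g")
  case True
  then have g_pos: "0 < g" using K_pos N_ge_1 g by (cases "g = 0") auto
  have "attenuation_drop g l \<le> 8 * (- t (l - 1) - - t l) / g"
    unfolding attenuation_drop_def
    using t_range[of l] t_strict[OF l] l d
    by (intro attenuation_increment_le[OF g_pos]) auto
  also have "\<dots> = 8 * cell_width l / g" by (simp add: cell_width_def)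
  also have "\<dots> \<le> K / N / g"
    using cell_width_le_weight[OF l] cell_weight_le[OF l] g_pos by (intro divide_right_mono) (auto simp: K_def)
  also have "\<dots> \<le> phi g"
    unfolding phi_def using True K_pos N_ge_1 g_pos by (simp add: field_simps)
  finally show ?thesis .
next
  case False
  have "attenuation_drop g l \<le> 1"
    using attenuation_le_1[OF g, of "- t (l - 1)"] attenuation_nonneg[of g "- t l"]
    by (simp add: attenuation_drop_def)
  also have "1 \<le> phi g"
  proof -
    have "0 < N * g + K" using K_pos N_ge_1 g by (simp add: add_nonneg_pos)
    then show ?thesis unfolding phi_def using False by (simp add: le_divide_eq)
  qed
  finally show ?thesis .
qed

lemma sum_attenuation_drop_square_le:
  assumes g: "0 \<le> g"
  shows "(\<Sum>l\<in>{1..m}. (attenuation_drop g l)\<^sup>2) \<le> phi g"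
proof -
  have "(\<Sum>l\<in>{1..m}. (attenuation_drop g l)\<^sup>2) \<le> (\<Sum>l\<in>{1..m}. attenuation_drop g l * phi g)"
    using attenuation_drop_nonneg[OF g] attenuation_drop_le_phi[OF g]
    by (intro sum_mono) (simp add: power2_eq_square mult_left_mono)
  also have "\<dots> = (attenuation g (- t 0) - attenuation g (- t m)) * phi g"
    using sum_telescope''[of 0 m "\<lambda>l. - attenuation g (- t l)"]
    by (simp add: attenuation_drop_def flip: sum_distrib_right)
  also have "\<dots> \<le> 1 * phi g"
    using attenuation_le_1[OF g, of "- t 0"] attenuation_nonneg[of g "- t m"] phi_nonneg[OF g]
    by (intro mult_right_mono) auto
  finally show ?thesis by simp
qed

definition fluctuation_bound :: "real \<Rightarrow> real" where
  "fluctuation_bound x = 4 * M\<^sup>2 * (\<alpha>bar / N)\<^sup>2 * (phi (smin * (xR - x)) + phi (smin * (x - xL)))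
    + 4 * (LL + LR)\<^sup>2 * (\<alpha>bar / N)^3"

lemma continuous_on_fluctuation_bound: "continuous_on {xL..xR} fluctuation_bound"
proof -
  have "continuous_on {xL..xR} (\<lambda>x. phi (smin * (xR - x)))" "continuous_on {xL..xR} (\<lambda>x. phi (smin * (x - xL)))"
    using smin_pos
    by (auto intro!: continuous_on_compose2[OF continuous_on_phi] continuous_intros)
  then show ?thesis unfolding fluctuation_bound_def by (intro continuous_intros)
qed

lemma fluctuation_bound_range:
  assumes "x \<in> {xL..xR}"
  shows "0 \<le> fluctuation_bound x" "fluctuation_bound x \<le> 4 * M\<^sup>2 * (\<alpha>bar / N)\<^sup>2 * 4 + 4 * (LL + LR)\<^sup>2 * (\<alpha>bar / N)^3"
proof -
  have R: "0 \<le> smin * (xR - x)" and L: "0 \<le> smin * (x - xL)" using assms smin_pos by auto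
  then have S: "0 \<le> phi (smin * (xR - x)) + phi (smin * (x - xL))"
    "phi (smin * (xR - x)) + phi (smin * (x - xL)) \<le> 4"
    using phi_nonneg[OF R] phi_nonneg[OF L] phi_le_2[OF R] phi_le_2[OF L] by linarith+
  show "0 \<le> fluctuation_bound x"
    unfolding fluctuation_bound_def using S(1) \<alpha>bar_pos N_ge_1 by (auto intro!: add_nonneg_nonneg mult_nonneg_nonneg)
  show "fluctuation_bound x \<le> 4 * M\<^sup>2 * (\<alpha>bar / N)\<^sup>2 * 4 + 4 * (LL + LR)\<^sup>2 * (\<alpha>bar / N)^3"
    unfolding fluctuation_bound_def using S(2) by (intro add_mono mult_left_mono) simp_all
qed

lemma sum_cell_weight_square_drops_le:
  assumes x: "x \<in> {xL..xR}"
  shows "(\<Sum>l\<in>{1..m}. (cell_weight l)\<^sup>2 * ((attenuation_drop (depth_R x) l)\<^sup>2 + (attenuation_drop (depth_L x) l)\<^sup>2))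
    \<le> (\<alpha>bar / N)\<^sup>2 * (phi (smin * (xR - x)) + phi (smin * (x - xL)))"
proof -
  have "(\<Sum>l\<in>{1..m}. (cell_weight l)\<^sup>2 * ((attenuation_drop (depth_R x) l)\<^sup>2 + (attenuation_drop (depth_L x) l)\<^sup>2))
      \<le> (\<Sum>l\<in>{1..m}. (\<alpha>bar / N)\<^sup>2 * ((attenuation_drop (depth_R x) l)\<^sup>2 + (attenuation_drop (depth_L x) l)\<^sup>2))"
    using cell_weight_le cell_weight_pos by (intro sum_mono mult_right_mono power_mono) (auto intro: less_imp_le)
  also have "\<dots> = (\<alpha>bar / N)\<^sup>2 * ((\<Sum>l\<in>{1..m}. (attenuation_drop (depth_R x) l)\<^sup>2)
      + (\<Sum>l\<in>{1..m}. (attenuation_drop (depth_L x) l)\<^sup>2))"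
    by (simp add: sum_distrib_left sum.distrib distrib_left)
  also have "\<dots> \<le> (\<alpha>bar / N)\<^sup>2 * (phi (depth_R x) + phi (depth_L x))"
    using sum_attenuation_drop_square_le depth_R_nonneg[OF x] depth_L_nonneg[OF x]
    by (intro mult_left_mono add_mono) auto
  also have "\<dots> \<le> (\<alpha>bar / N)\<^sup>2 * (phi (smin * (xR - x)) + phi (smin * (x - xL)))"
    using depth_R_lower[OF x] depth_L_lower[OF x] smin_pos x
    by (intro mult_left_mono add_mono phi_antimono) auto
  finally show ?thesis .
qed

lemma sum_cell_weight_square_width_square_le: "(\<Sum>l\<in>{1..m}. (cell_weight l)\<^sup>2 * (cell_width l)\<^sup>2) \<le> 2 * (\<alpha>bar / N)^3"
proof -
  have "(cell_weight l)\<^sup>2 * (cell_width l)\<^sup>2 \<le> 4 * (\<alpha>bar / N)^3 * cell_weight l" if l: "l \<in> {1..m}" for l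
  proof -
    have "(cell_weight l)\<^sup>2 * (cell_width l)\<^sup>2 \<le> (cell_weight l)\<^sup>2 * (2 * cell_weight l)\<^sup>2"
      using cell_width_le_weight[OF l] cell_width_pos[OF l] by (intro mult_left_mono power_mono) auto
    also have "\<dots> = 4 * (cell_weight l)^3 * cell_weight l" by (simp add: power2_eq_square power3_eq_cube)
    also have "\<dots> \<le> 4 * (\<alpha>bar / N)^3 * cell_weight l"
      using cell_weight_le[OF l] cell_weight_pos[OF l] by (intro mult_right_mono mult_left_mono power_mono) auto
    finally show ?thesis .
  qed
  then have "(\<Sum>l\<in>{1..m}. (cell_weight l)\<^sup>2 * (cell_width l)\<^sup>2) \<le> (\<Sum>l\<in>{1..m}. 4 * (\<alpha>bar / N)^3 * cell_weight l)"
    by (rule sum_mono)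
  also have "\<dots> = 2 * (\<alpha>bar / N)^3" unfolding sum_distrib_left[symmetric] sum_cell_weight by simp
  finally show ?thesis .
qed

lemma expectation_fluctuation_square_le:
  assumes x: "x \<in> {xL..xR}"
  shows "(\<integral>\<mu>. (fluctuation \<mu> x)\<^sup>2 \<partial>Pi\<^sub>M {1..m} cell_law) \<le> fluctuation_bound x"
proof -
  have "(\<integral>\<mu>. (fluctuation \<mu> x)\<^sup>2 \<partial>Pi\<^sub>M {1..m} cell_law)
      \<le> (\<Sum>l\<in>{1..m}. (cell_weight l)\<^sup>2 * (4 * M\<^sup>2 * ((attenuation_drop (depth_R x) l)\<^sup>2
        + (attenuation_drop (depth_L x) l)\<^sup>2) + 2 * (LL + LR)\<^sup>2 * (cell_width l)\<^sup>2))"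
    unfolding expectation_fluctuation_square by (intro sum_mono variance_pair_term_le x)
  also have "\<dots> = 4 * M\<^sup>2 * (\<Sum>l\<in>{1..m}. (cell_weight l)\<^sup>2 * ((attenuation_drop (depth_R x) l)\<^sup>2
        + (attenuation_drop (depth_L x) l)\<^sup>2)) + 2 * (LL + LR)\<^sup>2 * (\<Sum>l\<in>{1..m}. (cell_weight l)\<^sup>2 * (cell_width l)\<^sup>2)"
    by (simp add: sum_distrib_left sum.distrib algebra_simps)
  also have "\<dots> \<le> fluctuation_bound x"
  proof -
    have "4 * M\<^sup>2 * (\<Sum>l\<in>{1..m}. (cell_weight l)\<^sup>2 * ((attenuation_drop (depth_R x) l)\<^sup>2
        + (attenuation_drop (depth_L x) l)\<^sup>2))
        \<le> 4 * M\<^sup>2 * (\<alpha>bar / N)\<^sup>2 * (phi (smin * (xR - x)) + phi (smin * (x - xL)))"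
      using mult_left_mono[OF sum_cell_weight_square_drops_le[OF x], of "4 * M\<^sup>2"] by (simp add: mult.assoc)
    moreover have "2 * (LL + LR)\<^sup>2 * (\<Sum>l\<in>{1..m}. (cell_weight l)\<^sup>2 * (cell_width l)\<^sup>2)
        \<le> 4 * (LL + LR)\<^sup>2 * (\<alpha>bar / N)^3"
      using mult_left_mono[OF sum_cell_weight_square_width_square_le, of "2 * (LL + LR)\<^sup>2"] by simp
    ultimately show ?thesis unfolding fluctuation_bound_def by linarith
  qed
  finally show ?thesis .
qed

lemma integral_fluctuation_bound_le:
  "integral {xL..xR} fluctuation_bound \<le> \<alpha>bar^3 * (N powr (-3) * (1 + ln N))
    * (256 * M\<^sup>2 / smin * (1 + ln (1 + smin * (xR - xL) / K)) + 4 * (LL + LR)\<^sup>2 * (xR - xL))"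
proof -
  define a c where "a = N * smin" and "c = smin * (xR - xL) / K"
  define c1 c2 where "c1 = 4 * M\<^sup>2 * (\<alpha>bar / N)\<^sup>2" and "c2 = 4 * (LL + LR)\<^sup>2 * (\<alpha>bar / N)^3"
  have a: "0 < a" using N_ge_1 smin_pos by (simp add: a_def)
  have c: "0 \<le> c" using smin_pos K_pos slab by (simp add: c_def)
  have "fluctuation_bound = (\<lambda>x. c1 * 2 * (K / (a * (xR - x) + K) + K / (a * (x - xL) + K)) + c2)"
    by (simp add: fun_eq_iff fluctuation_bound_def phi_def c1_def c2_def a_def algebra_simps)
  moreover have "ln (a * (xR - xL) + K) - ln K = ln (1 + N * c)"
  proof -
    have "0 < a * (xR - xL) + K" using a K_pos slab by (simp add: add_pos_pos)
    then have "ln (a * (xR - xL) + K) - ln K = ln ((a * (xR - xL) + K) / K)"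
      using K_pos by (simp add: ln_div)
    also have "(a * (xR - xL) + K) / K = 1 + N * c"
      using K_pos by (simp add: a_def c_def field_simps)
    finally show ?thesis .
  qed
  ultimately have "(fluctuation_bound has_integral c1 * 2 * (2 * K / a * ln (1 + N * c)) + c2 * (xR - xL)) {xL..xR}"
    using has_integral_add[OF has_integral_mult_right[OF
        has_integral_inverse_boundary_distances[OF a K_pos less_imp_le[OF slab]], of "c1 * 2"]
        has_integral_const_real[of c2 xL xR]] slab
    by (simp add: mult.commute)
  then have "integral {xL..xR} fluctuation_bound = \<alpha>bar^3 / N^3 * (256 * M\<^sup>2 / smin * ln (1 + N * c) + 4 * (LL + LR)\<^sup>2 * (xR - xL))"
    using N_ge_1 smin_pos
    by (simp add: integral_unique c1_def c2_def a_def K_def field_simps power2_eq_square power3_eq_cube)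
  also have "\<dots> \<le> \<alpha>bar^3 / N^3 * (256 * M\<^sup>2 / smin * ((1 + ln N) * (1 + ln (1 + c)))
      + 4 * (LL + LR)\<^sup>2 * (xR - xL) * (1 + ln N))"
  proof (intro mult_left_mono add_mono)
    have "0 \<le> 4 * (LL + LR)\<^sup>2 * (xR - xL) * ln N" using slab ln_ge_zero[OF N_ge_1] by simp
    then show "4 * (LL + LR)\<^sup>2 * (xR - xL) \<le> 4 * (LL + LR)\<^sup>2 * (xR - xL) * (1 + ln N)"
      by (simp add: algebra_simps)
  qed (use ln_1_plus_mult_le[OF N_ge_1 c] smin_pos \<alpha>bar_pos N_ge_1 in auto)
  also have "\<dots> = \<alpha>bar^3 * (N powr (-3) * (1 + ln N))
      * (256 * M\<^sup>2 / smin * (1 + ln (1 + c)) + 4 * (LL + LR)\<^sup>2 * (xR - xL))"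
    using N_ge_1 by (simp add: powr_minus powr_realpow field_simps)
  finally show ?thesis by (simp add: c_def)
qed

subsection \<open>Integration over the slab\<close>

definition slab_law :: "real measure" where
  "slab_law = uniform_measure lborel {xL..xR}"

lemma prob_space_slab_law: "prob_space slab_law"
  unfolding slab_law_def using slab by (intro prob_space_uniform_measure) auto

lemma sets_slab_law[measurable_cong]: "sets slab_law = sets borel"
  by (simp add: slab_law_def)

lemma integral_slab_law:
  assumes f: "f \<in> borel_measurable borel" and bound: "\<And>x. x \<in> {xL..xR} \<Longrightarrow> \<bar>f x\<bar> \<le> B"
  shows "integral\<^sup>L slab_law f = integral {xL..xR} f / (xR - xL)"
proof -
  have "set_integrable lborel {xL..xR} f"
    unfolding set_integrable_def
    by (rule integrableI_bounded_set_indicator[where B=B]) (use f bound slab in auto)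
  then show ?thesis
    using integral_uniform_measure_lborel[of "{xL..xR}" f] f slab
    by (simp add: slab_law_def set_borel_integral_eq_integral(2))
qed

lemma abs_fluctuation_le: "\<bar>fluctuation \<mu> x\<bar> \<le> 2 * M"
proof -
  have "\<bar>pair_term l v x - (\<integral>w. pair_term l w x \<partial>cell_law l)\<bar> \<le> 4 * cell_weight l * M"
    if l: "l \<in> {1..m}" for l v
  proof -
    have "\<bar>\<integral>w. pair_term l w x \<partial>cell_law l\<bar> \<le> (\<integral>w. \<bar>pair_term l w x\<bar> \<partial>cell_law l)"
      by (rule integral_abs_bound)
    also have "\<dots> \<le> (\<integral>w. 2 * \<bar>cell_weight l\<bar> * M \<partial>cell_law l)"
      using integrable_pair_term(1) by (intro integral_mono abs_pair_term_le) auto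
    finally have "\<bar>\<integral>w. pair_term l w x \<partial>cell_law l\<bar> \<le> 2 * cell_weight l * M"
      using cell_weight_pos[OF l] by (simp add: cells.M.prob_space)
    then show ?thesis using abs_pair_term_le[of l v x] cell_weight_pos[OF l] by simp
  qed
  then have "\<bar>fluctuation \<mu> x\<bar> \<le> (\<Sum>l\<in>{1..m}. 4 * cell_weight l * M)"
    unfolding fluctuation_def by (intro order_trans[OF sum_abs sum_mono])
  also have "\<dots> = 4 * M * (\<Sum>l\<in>{1..m}. cell_weight l)" by (simp add: sum_distrib_left mult_ac)
  also have "\<dots> = 2 * M" unfolding sum_cell_weight by simp
  finally show ?thesis .
qed

text \<open>The integrand of the squared \<open>L\<^sup>2(\<sigma>)\<close> norm, extended measurably beyond the slab.\<close>
definition energy :: "(nat \<Rightarrow> real) \<Rightarrow> real \<Rightarrow> real" where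
  "energy \<mu> x = \<sigma> (clamp x) * (fluctuation \<mu> x)\<^sup>2"

lemma energy_bounds: "0 \<le> energy \<mu> x" "energy \<mu> x \<le> smax * (2 * M)\<^sup>2"
proof -
  have \<sigma>: "smin \<le> \<sigma> (clamp x)" "\<sigma> (clamp x) \<le> smax" using \<sigma>_bounds[OF clamp_in_slab] by auto
  show "0 \<le> energy \<mu> x" using \<sigma> smin_pos by (simp add: energy_def)
  have "(fluctuation \<mu> x)\<^sup>2 \<le> (2 * M)\<^sup>2"
    using abs_fluctuation_le[of \<mu> x] M_nonneg power2_le_iff_abs_le[of "2 * M" "fluctuation \<mu> x"]
    by simp
  then show "energy \<mu> x \<le> smax * (2 * M)\<^sup>2"
    unfolding energy_def using \<sigma> smin_pos by (intro mult_mono) auto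
qed

lemma measurable_energy[measurable]:
  assumes [measurable]: "\<And>l. l \<in> {1..m} \<Longrightarrow> (\<lambda>z. f z l) \<in> borel_measurable N'"
    "g \<in> borel_measurable N'"
  shows "(\<lambda>z. energy (f z) (g z)) \<in> borel_measurable N'"
proof -
  have [measurable]: "(\<lambda>x. \<sigma> (clamp x)) \<in> borel_measurable borel"
    by (rule borel_measurable_continuous_onI[OF continuous_on_compose_clamp[OF \<sigma>_cont]])
  show ?thesis unfolding energy_def by measurable
qed

definition fluctuation_norm :: "(nat \<Rightarrow> real) \<Rightarrow> real" where
  "fluctuation_norm \<mu> = sqrt ((xR - xL) * (\<integral>x. energy \<mu> x \<partial>slab_law))"

lemma L2_sigma_norm_delta_b_eq:
  assumes "\<forall>l\<in>{1..m}. \<mu> l \<in> cell l"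
  shows "L2_sigma_norm \<sigma> xL xR (delta_b d \<sigma> xL xR \<psi>L \<psi>R m t \<mu>) = fluctuation_norm \<mu>"
proof -
  have "integral {xL..xR} (\<lambda>x. (delta_b d \<sigma> xL xR \<psi>L \<psi>R m t \<mu> x)\<^sup>2 * \<sigma> x)
      = integral {xL..xR} (energy \<mu>)"
    by (rule integral_cong) (simp add: delta_b_eq_fluctuation[OF assms] energy_def clamp_id)
  also have "\<dots> = (xR - xL) * (\<integral>x. energy \<mu> x \<partial>slab_law)"
    using integral_slab_law[of "energy \<mu>" "smax * (2 * M)\<^sup>2"] energy_bounds slab by simp
  finally show ?thesis by (simp add: L2_sigma_norm_def fluctuation_norm_def)
qed

lemma integral_energy_bounds:
  "0 \<le> (\<integral>x. energy \<mu> x \<partial>slab_law)" "(\<integral>x. energy \<mu> x \<partial>slab_law) \<le> smax * (2 * M)\<^sup>2"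
proof -
  interpret prob_space slab_law by (rule prob_space_slab_law)
  show "0 \<le> (\<integral>x. energy \<mu> x \<partial>slab_law)" by (simp add: energy_bounds)
  show "(\<integral>x. energy \<mu> x \<partial>slab_law) \<le> smax * (2 * M)\<^sup>2"
    using energy_bounds
    by (intro integral_le_const integrable_const_bound[where B="smax * (2 * M)\<^sup>2"]) auto
qed

lemma fluctuation_norm_square: "(fluctuation_norm \<mu>)\<^sup>2 = (xR - xL) * (\<integral>x. energy \<mu> x \<partial>slab_law)"
  using integral_energy_bounds(1) slab by (simp add: fluctuation_norm_def)

lemma fluctuation_norm_nonneg: "0 \<le> fluctuation_norm \<mu>"
  using integral_energy_bounds(1) slab by (simp add: fluctuation_norm_def)

lemma abs_fluctuation_norm_le: "\<bar>fluctuation_norm \<mu>\<bar> \<le> sqrt ((xR - xL) * (smax * (2 * M)\<^sup>2))"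
  using integral_energy_bounds[of \<mu>] slab by (simp add: fluctuation_norm_def mult_left_mono)

lemma integral_energy_swap:
  "(\<integral>\<mu>. (\<integral>x. energy \<mu> x \<partial>slab_law) \<partial>Pi\<^sub>M {1..m} cell_law)
    = (\<integral>x. (\<integral>\<mu>. energy \<mu> x \<partial>Pi\<^sub>M {1..m} cell_law) \<partial>slab_law)"
proof -
  let ?P = "Pi\<^sub>M {1..m} cell_law"
  interpret XP: pair_sigma_finite slab_law ?P
    by (intro pair_sigma_finite.intro prob_space_imp_sigma_finite prob_space_slab_law
        prob_space_PiM prob_space_cell_law)
  interpret XxP: prob_space "slab_law \<Otimes>\<^sub>M ?P"
    by (intro prob_space_pair prob_space_slab_law prob_space_PiM prob_space_cell_law)
  have "(\<lambda>z. snd z l) \<in> borel_measurable (slab_law \<Otimes>\<^sub>M ?P)" if "l \<in> {1..m}" for l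
    using measurable_component_singleton[OF that, of cell_law]
    by (simp add: measurable_cong_sets[OF refl sets_cell_law])
  moreover have "fst \<in> borel_measurable (slab_law \<Otimes>\<^sub>M ?P)"
    using measurable_fst[of slab_law ?P] by (simp add: measurable_cong_sets[OF refl sets_slab_law])
  ultimately have "(\<lambda>z. energy (snd z) (fst z)) \<in> borel_measurable (slab_law \<Otimes>\<^sub>M ?P)"
    by (rule measurable_energy)
  then have "integrable (slab_law \<Otimes>\<^sub>M ?P) (\<lambda>(x, \<mu>). energy \<mu> x)"
    using energy_bounds
    by (intro XxP.integrable_const_bound[where B="smax * (2 * M)\<^sup>2"]) (auto simp: case_prod_beta)
  then show ?thesis by (rule XP.Fubini_integral)
qed

lemma expectation_energy_le:
  assumes x: "x \<in> {xL..xR}"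
  shows "(\<integral>\<mu>. energy \<mu> x \<partial>Pi\<^sub>M {1..m} cell_law) \<le> smax * fluctuation_bound x"
proof -
  have "(\<integral>\<mu>. energy \<mu> x \<partial>Pi\<^sub>M {1..m} cell_law)
      = \<sigma> x * (\<integral>\<mu>. (fluctuation \<mu> x)\<^sup>2 \<partial>Pi\<^sub>M {1..m} cell_law)"
    by (simp add: energy_def clamp_id[OF x])
  also have "\<dots> \<le> smax * fluctuation_bound x"
    using \<sigma>_bounds[OF x] smin_pos expectation_fluctuation_square_le[OF x]
    by (intro mult_mono) (auto intro: integral_nonneg_AE)
  finally show ?thesis .
qed

lemma expectation_integral_energy_le:
  "(\<integral>\<mu>. (\<integral>x. energy \<mu> x \<partial>slab_law) \<partial>Pi\<^sub>M {1..m} cell_law)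
    \<le> smax * integral {xL..xR} fluctuation_bound / (xR - xL)"
proof -
  interpret X: prob_space slab_law by (rule prob_space_slab_law)
  define B where "B = smax * (4 * M\<^sup>2 * (\<alpha>bar / N)\<^sup>2 * 4 + 4 * (LL + LR)\<^sup>2 * (\<alpha>bar / N)^3)"
  have bound_meas[measurable]: "(\<lambda>x. smax * fluctuation_bound (clamp x)) \<in> borel_measurable borel"
    using borel_measurable_continuous_onI[OF continuous_on_compose_clamp[OF continuous_on_fluctuation_bound]] by simp
  have bound_abs: "\<bar>smax * fluctuation_bound (clamp x)\<bar> \<le> B" for x
    using fluctuation_bound_range[OF clamp_in_slab[of x]] smax_pos by (simp add: B_def abs_mult)
  have "AE x in slab_law. x \<in> {xL..xR}"
    unfolding slab_law_def using slab by (intro AE_uniform_measureI) auto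
  then have AE_le: "AE x in slab_law.
      (\<integral>\<mu>. energy \<mu> x \<partial>Pi\<^sub>M {1..m} cell_law) \<le> smax * fluctuation_bound (clamp x)"
    by eventually_elim (metis clamp_id expectation_energy_le)
  have "(\<integral>x. (\<integral>\<mu>. energy \<mu> x \<partial>Pi\<^sub>M {1..m} cell_law) \<partial>slab_law)
      \<le> (\<integral>x. smax * fluctuation_bound (clamp x) \<partial>slab_law)"
    using fluctuation_bound_range(1)[OF clamp_in_slab] smax_pos
    by (intro integral_mono_AE'[OF X.integrable_const_bound[where B=B] AE_le])
       (auto simp: bound_abs abs_le_D1[OF bound_abs])
  also have "\<dots> = integral {xL..xR} (\<lambda>x. smax * fluctuation_bound (clamp x)) / (xR - xL)"
    by (rule integral_slab_law[OF bound_meas bound_abs])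
  also have "integral {xL..xR} (\<lambda>x. smax * fluctuation_bound (clamp x)) = integral {xL..xR} (\<lambda>x. smax * fluctuation_bound x)"
    by (rule integral_cong) (simp add: clamp_id)
  also have "\<dots> = smax * integral {xL..xR} fluctuation_bound"
    using integral_cmul[of "{xL..xR}" smax fluctuation_bound] by simp
  finally show ?thesis by (simp only: integral_energy_swap)
qed

lemma measurable_energy_PiM:
  "(\<lambda>(\<mu>, x). energy \<mu> x) \<in> borel_measurable (Pi\<^sub>M {1..m} cell_law \<Otimes>\<^sub>M slab_law)"
proof -
  have "(\<lambda>z. fst z l) \<in> borel_measurable (Pi\<^sub>M {1..m} cell_law \<Otimes>\<^sub>M slab_law)" if "l \<in> {1..m}" for l
    using measurable_component_singleton[OF that, of cell_law]
    by (simp add: measurable_cong_sets[OF refl sets_cell_law])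
  moreover have "snd \<in> borel_measurable (Pi\<^sub>M {1..m} cell_law \<Otimes>\<^sub>M slab_law)"
    using measurable_snd[of _ slab_law] by (simp add: measurable_cong_sets[OF refl sets_slab_law])
  ultimately show ?thesis
    unfolding case_prod_beta by (rule measurable_energy)
qed

lemma measurable_fluctuation_norm[measurable]:
  "fluctuation_norm \<in> borel_measurable (Pi\<^sub>M {1..m} cell_law)"
proof -
  interpret sigma_finite_measure slab_law by (rule prob_space_imp_sigma_finite[OF prob_space_slab_law])
  have "(\<lambda>\<mu>. \<integral>x. energy \<mu> x \<partial>slab_law) \<in> borel_measurable (Pi\<^sub>M {1..m} cell_law)"
    using measurable_energy_PiM by (rule borel_measurable_lebesgue_integral)
  then show ?thesis unfolding fluctuation_norm_def[abs_def] by measurable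
qed

lemma integrable_fluctuation_norm:
  "integrable (Pi\<^sub>M {1..m} cell_law) fluctuation_norm"
  "integrable (Pi\<^sub>M {1..m} cell_law) (\<lambda>\<mu>. (fluctuation_norm \<mu>)\<^sup>2)"
proof -
  define B where "B = sqrt ((xR - xL) * (smax * (2 * M)\<^sup>2))"
  have bound: "\<bar>fluctuation_norm \<mu>\<bar> \<le> B" and square_bound: "\<bar>(fluctuation_norm \<mu>)\<^sup>2\<bar> \<le> B\<^sup>2" for \<mu>
    using abs_fluctuation_norm_le[of \<mu>] power_mono[OF abs_fluctuation_norm_le[of \<mu>] abs_ge_zero, of 2]
    by (simp_all add: B_def)
  show "integrable (Pi\<^sub>M {1..m} cell_law) fluctuation_norm"
    by (rule cells.P.integrable_const_bound[where B=B]) (use bound in simp, measurable)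
  show "integrable (Pi\<^sub>M {1..m} cell_law) (\<lambda>\<mu>. (fluctuation_norm \<mu>)\<^sup>2)"
    by (rule cells.P.integrable_const_bound[where B="B\<^sup>2"]) (use square_bound in simp, measurable)
qed

lemma expected_L2_norm_delta_b_le:
  "(\<integral>\<mu>. L2_sigma_norm \<sigma> xL xR (delta_b d \<sigma> xL xR \<psi>L \<psi>R m t \<mu>) \<partial>ordinate_law m t)
    \<le> sqrt (smax * integral {xL..xR} fluctuation_bound)"
proof -
  let ?P = "Pi\<^sub>M {1..m} cell_law"
  let ?f = "\<lambda>\<mu>. L2_sigma_norm \<sigma> xL xR (delta_b d \<sigma> xL xR \<psi>L \<psi>R m t \<mu>)"
  have "integral\<^sup>L ?P ?f \<le> integral\<^sup>L ?P fluctuation_norm"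
  proof (cases "integrable ?P ?f")
    case True
    have "AE \<mu> in ?P. ?f \<mu> = fluctuation_norm \<mu>"
      using AE_ordinates_in_cells by eventually_elim (rule L2_sigma_norm_delta_b_eq)
    then have "integral\<^sup>L ?P ?f = integral\<^sup>L ?P fluctuation_norm"
      by (rule integral_cong_AE[OF borel_measurable_integrable[OF True] measurable_fluctuation_norm])
    then show ?thesis by simp
  next
    case False
    then show ?thesis
      by (simp add: not_integrable_integral_eq integral_nonneg_AE fluctuation_norm_nonneg)
  qed
  also have "\<dots> \<le> sqrt (\<integral>\<mu>. (fluctuation_norm \<mu>)\<^sup>2 \<partial>?P)"
    by (rule cells.P.expectation_le_sqrt_expectation_square[OF integrable_fluctuation_norm])
  also have "(\<integral>\<mu>. (fluctuation_norm \<mu>)\<^sup>2 \<partial>?P) = (xR - xL) * (\<integral>\<mu>. (\<integral>x. energy \<mu> x \<partial>slab_law) \<partial>?P)"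
    by (simp add: fluctuation_norm_square)
  also have "\<dots> \<le> smax * integral {xL..xR} fluctuation_bound"
    using mult_left_mono[OF expectation_integral_energy_le, of "xR - xL"] slab by simp
  finally show ?thesis by (simp add: ordinate_law_eq)
qed

lemma expected_L2_norm_delta_b_rate:
  "(\<integral>\<mu>. L2_sigma_norm \<sigma> xL xR (delta_b d \<sigma> xL xR \<psi>L \<psi>R m t \<mu>) \<partial>ordinate_law m t)
    \<le> sqrt (smax * \<alpha>bar^3 * (256 * M\<^sup>2 / smin * (1 + ln (1 + smin * (xR - xL) / (16 * \<alpha>bar)))
        + 4 * (LL + LR)\<^sup>2 * (xR - xL)))
      * sqrt (real (2*m) powr (-3) * (1 + ln (real (2*m))))"
proof -
  have "smax * integral {xL..xR} fluctuation_bound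
      \<le> smax * \<alpha>bar^3 * (256 * M\<^sup>2 / smin * (1 + ln (1 + smin * (xR - xL) / (16 * \<alpha>bar)))
        + 4 * (LL + LR)\<^sup>2 * (xR - xL)) * (N powr (-3) * (1 + ln N))"
    using mult_left_mono[OF integral_fluctuation_bound_le less_imp_le[OF smax_pos]] by (simp add: K_def ac_simps)
  then have "sqrt (smax * integral {xL..xR} fluctuation_bound) \<le> sqrt (smax * \<alpha>bar^3 * (256 * M\<^sup>2 / smin
        * (1 + ln (1 + smin * (xR - xL) / (16 * \<alpha>bar)))
      + 4 * (LL + LR)\<^sup>2 * (xR - xL))) * sqrt (N powr (-3) * (1 + ln N))"
    by (simp flip: real_sqrt_mult)
  with expected_L2_norm_delta_b_le show ?thesis by (simp add: N_def)
qed

end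

lemma slab_exists:
  fixes \<sigma> \<psi>L \<psi>R :: "real \<Rightarrow> real"
  assumes "xL < xR" "continuous_on {xL..xR} \<sigma>" "\<And>x. x \<in> {xL..xR} \<Longrightarrow> \<sigma> x > 0"
    and "bounded (\<psi>L ` {0<..1})" "LL-lipschitz_on {0<..1} \<psi>L"
    and "bounded (\<psi>R ` {-1..<0})" "LR-lipschitz_on {-1..<0} \<psi>R"
  obtains smin smax M where "slab xL xR smin smax M LL LR \<sigma> \<psi>L \<psi>R"
proof -
  obtain BL BR where BL: "\<And>v. v \<in> {0<..1} \<Longrightarrow> \<bar>\<psi>L v\<bar> \<le> BL"
    and BR: "\<And>v. v \<in> {-1..<0} \<Longrightarrow> \<bar>\<psi>R v\<bar> \<le> BR"
    using assms(4,6) unfolding bounded_iff by (metis image_eqI real_norm_def)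
  obtain a b where a: "a \<in> {xL..xR}" "\<And>y. y \<in> {xL..xR} \<Longrightarrow> \<sigma> a \<le> \<sigma> y"
    and b: "b \<in> {xL..xR}" "\<And>y. y \<in> {xL..xR} \<Longrightarrow> \<sigma> y \<le> \<sigma> b"
    using continuous_attains_inf[of "{xL..xR}" \<sigma>] continuous_attains_sup[of "{xL..xR}" \<sigma>] assms(1,2)
    by auto
  have "slab xL xR (\<sigma> a) (\<sigma> b) (max BL BR) LL LR \<sigma> \<psi>L \<psi>R"
    using assms a b BL BR by unfold_locales (force simp: le_max_iff_disj)+
  then show ?thesis ..
qed

theorem mainTheorem7:
  fixes xL xR d \<alpha>bar L\<^sub>L L\<^sub>R :: real
    and \<sigma> \<psi>L \<psi>R :: "real \<Rightarrow> real"
  assumes "xL < xR"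
    and "continuous_on {xL..xR} \<sigma>"
    and "\<And>x. x \<in> {xL..xR} \<Longrightarrow> \<sigma> x > 0"
    and "bounded (\<psi>L ` {0<..1})" and "L\<^sub>L-lipschitz_on {0<..1} \<psi>L"
    and "bounded (\<psi>R ` {-1..<0})" and "L\<^sub>R-lipschitz_on {-1..<0} \<psi>R"
    and "0 \<le> d" and "d < 1"
  shows "\<exists>C. \<forall>(m::nat) (t::nat \<Rightarrow> real).
           m \<ge> 1 \<and> t 0 = -1 \<and> t m = -d \<and> (\<forall>l\<in>{1..m}. t (l - 1) < t l)
           \<and> (\<forall>j\<in>{1..2*m}. real (2*m) * weight d m t j \<le> \<alpha>bar)
         \<longrightarrow> (\<integral>\<mu>. L2_sigma_norm \<sigma> xL xR (delta_b d \<sigma> xL xR \<psi>L \<psi>R m t \<mu>) \<partial>ordinate_law m t)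
             \<le> C * sqrt (real (2*m) powr (-3) * (1 + ln (real (2*m))))"
proof -
  obtain smin smax M where "slab xL xR smin smax M L\<^sub>L L\<^sub>R \<sigma> \<psi>L \<psi>R"
    by (rule slab_exists[OF assms(1-7)])
  then interpret slab xL xR smin smax M L\<^sub>L L\<^sub>R \<sigma> \<psi>L \<psi>R .
  show ?thesis
  proof (intro exI allI impI)
    fix m t assume "m \<ge> 1 \<and> t 0 = -1 \<and> t m = -d \<and> (\<forall>l\<in>{1..m}. t (l - 1) < t l)
      \<and> (\<forall>j\<in>{1..2*m}. real (2*m) * weight d m t j \<le> \<alpha>bar)"
    then interpret quadrature xL xR smin smax M L\<^sub>L L\<^sub>R \<sigma> \<psi>L \<psi>R d \<alpha>bar m t
      using assms by unfold_locales auto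
    show "(\<integral>\<mu>. L2_sigma_norm \<sigma> xL xR (delta_b d \<sigma> xL xR \<psi>L \<psi>R m t \<mu>) \<partial>ordinate_law m t)
        \<le> sqrt (smax * \<alpha>bar^3 * (256 * M\<^sup>2 / smin * (1 + ln (1 + smin * (xR - xL) / (16 * \<alpha>bar)))
            + 4 * (L\<^sub>L + L\<^sub>R)\<^sup>2 * (xR - xL)))
          * sqrt (real (2*m) powr (-3) * (1 + ln (real (2*m))))"
      by (rule expected_L2_norm_delta_b_rate)
  qed
qed

end
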